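(* Let $\alpha\neq0$ be real, let $\vec a$ be a timelike vector of $\mathbb L^3$, and let $S$ be a spacelike surface of $\mathbb L^3$ that is invariant under the one-parameter group of rotations of $\mathbb L^3$ about a spacelike axis $L$. Suppose that $S$ satisfies $$H(p)=\alpha\frac{\langle N(p),\vec a\rangle}{\langle p,\vec a\rangle}\qquad (p\in S).$$ Then either $\vec a$ is orthogonal to $L$, or (up to a rigid motion taking $L$ to the $x$-axis) $S$ is the hyperbolic plane $\mathbb H^2(r)$ for some $r>0$, in which case $\vec a$ may be an arbitrary timelike vector.
   Context: $\mathbb L^3$ is $\mathbb R^3$ with the metric $\langle\cdot,\cdot\rangle=dx^2+dy^2-dz^2$. A spacelike surface has Riemannian induced metric and timelike unit normal $N$; $H$ denotes its mean curvature, the trace of the second fundamental form with respect to $N$. Rotations about a spacelike axis: when the axis is the $x$-axis, these are the linear isometries $\begin{pmatrix}1&0&0\\0&\cosh\theta&\sinh\theta\\0&\sinh\theta&\cosh\theta\end{pmatrix}$, $\theta\in\mathbb R$, and a general spacelike axis is obtained from this by a rigid motion. The hyperbolic plane is $\mathbb H^2(r)=\{p\in\mathbb L^3:\langle p,p\rangle=-r^2,\ z>0\}$. *)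

theory Defs
  imports "HOL-Analysis.Analysis"
begin

text \<open>Lorentz--Minkowski space L^3: points of real^3, coordinates x = p$1, y = p$2, z = p$3.\<close>

definition lor :: "real^3 \<Rightarrow> real^3 \<Rightarrow> real" where
  "lor p q = p$1 * q$1 + p$2 * q$2 - p$3 * q$3"

definition timelike :: "real^3 \<Rightarrow> bool" where
  "timelike v \<longleftrightarrow> lor v v < 0"

definition rigid_motion :: "(real^3 \<Rightarrow> real^3) \<Rightarrow> bool" where
  "rigid_motion \<Phi> \<longleftrightarrow> (\<exists>(M::real^3^3) b. (\<forall>x y. lor (M *v x) (M *v y) = lor x y)
                          \<and> \<Phi> = (\<lambda>x. M *v x + b))"

definition x_axis :: "(real^3) set" where
  "x_axis = {p. p$2 = 0 \<and> p$3 = 0}"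

definition rot_x :: "real \<Rightarrow> real^3 \<Rightarrow> real^3" where
  "rot_x \<theta> p = vector [p$1, cosh \<theta> * p$2 + sinh \<theta> * p$3, sinh \<theta> * p$2 + cosh \<theta> * p$3]"

definition hyperbolic_plane :: "real \<Rightarrow> (real^3) set" where
  "hyperbolic_plane r = {p. lor p p = - (r^2) \<and> p$3 > 0}"

definition C2_patch :: "(real \<times> real) set \<Rightarrow> (real \<times> real \<Rightarrow> real^3) \<Rightarrow> (real \<times> real \<Rightarrow> real^3)
   \<Rightarrow> (real \<times> real \<Rightarrow> real^3) \<Rightarrow> (real \<times> real \<Rightarrow> real^3) \<Rightarrow> (real \<times> real \<Rightarrow> real^3)
   \<Rightarrow> (real \<times> real \<Rightarrow> real^3) \<Rightarrow> bool" where
  "C2_patch U X Xu Xv Xuu Xuv Xvv \<longleftrightarrow> open U \<and>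
     (\<forall>w\<in>U.
        ((\<lambda>t. X (t, snd w)) has_vector_derivative Xu w) (at (fst w)) \<and>
        ((\<lambda>t. X (fst w, t)) has_vector_derivative Xv w) (at (snd w)) \<and>
        ((\<lambda>t. Xu (t, snd w)) has_vector_derivative Xuu w) (at (fst w)) \<and>
        ((\<lambda>t. Xu (fst w, t)) has_vector_derivative Xuv w) (at (snd w)) \<and>
        ((\<lambda>t. Xv (fst w, t)) has_vector_derivative Xvv w) (at (snd w))) \<and>
     continuous_on U X \<and> continuous_on U Xu \<and> continuous_on U Xv \<and>
     continuous_on U Xuu \<and> continuous_on U Xuv \<and> continuous_on U Xvv"

text \<open>A local parametrization of S (homeomorphism onto a relatively open piece of S)
  whose induced (Lorentz) metric E du^2 + 2F du dv + G dv^2 is Riemannian.\<close>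
definition spacelike_patch :: "(real^3) set \<Rightarrow> (real \<times> real) set \<Rightarrow> (real \<times> real \<Rightarrow> real^3)
   \<Rightarrow> (real \<times> real \<Rightarrow> real^3) \<Rightarrow> (real \<times> real \<Rightarrow> real^3) \<Rightarrow> (real \<times> real \<Rightarrow> real^3)
   \<Rightarrow> (real \<times> real \<Rightarrow> real^3) \<Rightarrow> (real \<times> real \<Rightarrow> real^3) \<Rightarrow> bool" where
  "spacelike_patch S U X Xu Xv Xuu Xuv Xvv \<longleftrightarrow>
     C2_patch U X Xu Xv Xuu Xuv Xvv \<and>
     (\<forall>w\<in>U. lor (Xu w) (Xu w) > 0 \<and>
             lor (Xu w) (Xu w) * lor (Xv w) (Xv w) - (lor (Xu w) (Xv w))^2 > 0) \<and>
     inj_on X U \<and> (\<exists>g. homeomorphism U (X ` U) X g) \<and>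
     (\<exists>V. open V \<and> X ` U = S \<inter> V)"

definition spacelike_surface :: "(real^3) set \<Rightarrow> bool" where
  "spacelike_surface S \<longleftrightarrow> S \<noteq> {} \<and> connected S \<and>
     (\<forall>p\<in>S. \<exists>U X Xu Xv Xuu Xuv Xvv. spacelike_patch S U X Xu Xv Xuu Xuv Xvv \<and> p \<in> X ` U)"

text \<open>Mean curvature at parameter w w.r.t. the timelike unit normal n:
  trace of the second fundamental form (e,f,g) = (<Xuu,n>,<Xuv,n>,<Xvv,n>)
  with respect to the first fundamental form (E,F,G).\<close>
definition mean_curv :: "(real \<times> real \<Rightarrow> real^3) \<Rightarrow> (real \<times> real \<Rightarrow> real^3) \<Rightarrow> (real \<times> real \<Rightarrow> real^3)
   \<Rightarrow> (real \<times> real \<Rightarrow> real^3) \<Rightarrow> (real \<times> real \<Rightarrow> real^3) \<Rightarrow> real^3 \<Rightarrow> real \<times> real \<Rightarrow> real" where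
  "mean_curv Xu Xv Xuu Xuv Xvv n w =
     (let E = lor (Xu w) (Xu w); F = lor (Xu w) (Xv w); G = lor (Xv w) (Xv w);
          e = lor (Xuu w) n; f = lor (Xuv w) n; g = lor (Xvv w) n
      in (e * G - 2 * f * F + g * E) / (E * G - F^2))"

end

theory Submission
  imports Defs
begin

text \<open>Write the axis as \<open>L = \<Psi> (x-axis)\<close> with \<open>\<Psi> x = M x + b\<close>. If the Lorentz adjoint \<open>M\<^sup>* a\<close>
  has vanishing first component, \<open>a\<close> is orthogonal to \<open>L\<close>. Otherwise the equation
  \<open>H \<langle>p, a\<rangle> = \<alpha> \<langle>N, a\<rangle>\<close>, transported along the rotation orbit of \<open>p\<close>, is an identity
  in \<open>1, cosh \<theta>, sinh \<theta>\<close>, which forces \<open>H (p - P\<^sub>0) = \<alpha> N\<close> for a fixed point \<open>P\<^sub>0\<close>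
  on \<open>L\<close>. Thus \<open>p - P\<^sub>0\<close> is a timelike normal, so \<open>\<langle>p - P\<^sub>0, p - P\<^sub>0\<rangle>\<close> is locally
  constant and negative; by connectedness \<open>S\<close> lies in one sheet of a hyperboloid centred at
  \<open>P\<^sub>0\<close>, which a rigid motion fixing the axis carries onto \<open>hyperbolic_plane r\<close>.\<close>

lemma lor_sym: "lor x y = lor y x"
  by (simp add: lor_def algebra_simps)

lemma lor_add_left: "lor (x + y) z = lor x z + lor y z"
  by (simp add: lor_def algebra_simps)

lemma lor_scaleR_left: "lor (c *\<^sub>R x) z = c * lor x z"
  by (simp add: lor_def algebra_simps)

lemma lor_scaleR_right: "lor z (c *\<^sub>R x) = c * lor z x"
  by (simp add: lor_def algebra_simps)

lemma matrix_vector_mult_nth_3: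
  fixes A :: "real^3^3"
  shows "(A *v x) $ i = A$i$1 * x$1 + A$i$2 * x$2 + A$i$3 * x$3"
  by (simp add: matrix_vector_mult_def sum_3)

definition lorentz_iso :: "real^3^3 \<Rightarrow> bool" where
  "lorentz_iso A \<longleftrightarrow> (\<forall>x y. lor (A *v x) (A *v y) = lor x y)"

definition lorentz_sign :: "3 \<Rightarrow> real" where
  "lorentz_sign i = (if i = 3 then -1 else 1)"

text \<open>The adjoint \<open>\<eta> A\<^sup>T \<eta>\<close> of \<open>A\<close> for \<open>lor\<close>, where \<open>\<eta> = diag(1,1,-1)\<close>.\<close>
definition lorentz_adj :: "real^3^3 \<Rightarrow> real^3^3" where
  "lorentz_adj A = (\<chi> i j. lorentz_sign i * lorentz_sign j * A$j$i)"

lemma lor_axis_left: "lor (axis i 1) x = lorentz_sign i * x $ i"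
  using exhaust_3[of i] by (auto simp: lor_def lorentz_sign_def axis_def)

lemma lorentz_adj_nth: "(lorentz_adj A *v y) $ i = lorentz_sign i * lor (A *v axis i 1) y"
  using exhaust_3[of i]
  by (auto simp: matrix_vector_mult_nth_3 lorentz_adj_def lor_def lorentz_sign_def axis_def
      algebra_simps)

lemma lorentz_adj_left_inverse:
  assumes "lorentz_iso A"
  shows "lorentz_adj A *v (A *v x) = x"
proof -
  have "(lorentz_adj A *v (A *v x)) $ i = x $ i" for i
    using assms exhaust_3[of i]
    by (auto simp: lorentz_adj_nth lorentz_iso_def lor_axis_left lorentz_sign_def)
  then show ?thesis
    by (simp add: vec_eq_iff)
qed

lemma lorentz_adj_right_inverse:
  assumes "lorentz_iso A"
  shows "A *v (lorentz_adj A *v x) = x"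
proof -
  have "lorentz_adj A ** A = mat 1"
    using lorentz_adj_left_inverse[OF assms]
    by (simp add: matrix_eq matrix_vector_mul_assoc[symmetric])
  then have "A ** lorentz_adj A = mat 1"
    using matrix_left_right_inverse by blast
  then show ?thesis
    by (metis matrix_vector_mul_assoc matrix_vector_mul_lid)
qed

lemma lor_lorentz_iso_left:
  assumes "lorentz_iso A"
  shows "lor (A *v x) y = lor x (lorentz_adj A *v y)"
  by (metis assms lorentz_iso_def lorentz_adj_right_inverse)

lemma lorentz_iso_adj:
  assumes "lorentz_iso A"
  shows "lorentz_iso (lorentz_adj A)"
  unfolding lorentz_iso_def
  by (metis assms lor_lorentz_iso_left lorentz_adj_right_inverse)

lemma lorentz_iso_mult: "lorentz_iso A \<Longrightarrow> lorentz_iso B \<Longrightarrow> lorentz_iso (A ** B)"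
  by (simp add: lorentz_iso_def matrix_vector_mul_assoc[symmetric])

lemma inv_affine_lorentz_iso:
  assumes "lorentz_iso A"
  shows "inv (\<lambda>x. A *v x + b) p = lorentz_adj A *v (p - b)"
proof (rule inv_f_eq)
  show "inj (\<lambda>x. A *v x + b)"
    by (rule injI) (metis add_right_cancel assms lorentz_adj_left_inverse)
qed (simp add: assms lorentz_adj_right_inverse)

lemma rigid_motion_iff: "rigid_motion \<Phi> \<longleftrightarrow> (\<exists>A c. lorentz_iso A \<and> \<Phi> = (\<lambda>x. A *v x + c))"
  by (simp add: rigid_motion_def lorentz_iso_def)

lemma rigid_motion_affine: "lorentz_iso A \<Longrightarrow> rigid_motion (\<lambda>x. A *v x + c)"
  by (auto simp: rigid_motion_iff)

lemma rigid_motion_comp: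
  assumes "rigid_motion f" "rigid_motion g"
  shows "rigid_motion (g \<circ> f)"
proof -
  obtain A c B d where "lorentz_iso A" "f = (\<lambda>x. A *v x + c)" "lorentz_iso B" "g = (\<lambda>x. B *v x + d)"
    using assms by (auto simp: rigid_motion_iff)
  then have "g \<circ> f = (\<lambda>x. (B ** A) *v x + (B *v c + d))" "lorentz_iso (B ** A)"
    by (auto simp: matrix_vector_right_distrib matrix_vector_mul_assoc lorentz_iso_mult)
  then show ?thesis
    by (metis rigid_motion_affine)
qed

definition time_flip :: "real^3^3" where
  "time_flip = (\<chi> i j. if i = j then lorentz_sign i else 0)"

lemma time_flip_apply: "time_flip *v v = vector [v$1, v$2, - v$3]"
  by (simp add: vec_eq_iff forall_3 matrix_vector_mult_nth_3 time_flip_def lorentz_sign_def)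

lemma rigid_motion_time_flip: "rigid_motion (\<lambda>x. time_flip *v x)"
proof -
  have "lorentz_iso time_flip"
    by (simp add: lorentz_iso_def time_flip_apply lor_def)
  then show ?thesis
    using rigid_motion_affine[of time_flip 0] by simp
qed

definition rot_x_matrix :: "real \<Rightarrow> real^3^3" where
  "rot_x_matrix t = (\<chi> i j. if i = 1 then (if j = 1 then 1 else 0) else if j = 1 then 0
      else if i = j then cosh t else sinh t)"

lemma rot_x_eq_matrix: "rot_x t p = rot_x_matrix t *v p"
  by (simp add: vec_eq_iff forall_3 rot_x_def rot_x_matrix_def matrix_vector_mult_nth_3)

lemma lorentz_iso_rot_x_matrix: "lorentz_iso (rot_x_matrix t)"
proof -
  have "cosh t ^ 2 - sinh t ^ 2 = 1"
    by (simp add: cosh_square_eq)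
  then show ?thesis
    unfolding lorentz_iso_def
    by (auto simp: lor_def matrix_vector_mult_nth_3 rot_x_matrix_def)
      (simp add: power2_eq_square algebra_simps; algebra)
qed

lemma lor_rot_x_matrix_left:
  "lor (rot_x_matrix t *v q) a =
     q$1 * a$1 + cosh t * (q$2 * a$2 - q$3 * a$3) + sinh t * (q$3 * a$2 - q$2 * a$3)"
  by (simp add: lor_def matrix_vector_mult_nth_3 rot_x_matrix_def algebra_simps)

lemma continuous_on_matrix_vector_mult:
  fixes A :: "real^3^3" and g :: "'a::euclidean_space \<Rightarrow> real^3"
  assumes "continuous_on S g"
  shows "continuous_on S (\<lambda>x. A *v g x)"
  using linear_continuous_on_compose[OF assms matrix_vector_mul_linear] .

lemma continuous_on_affine:
  fixes A :: "real^3^3"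
  shows "continuous_on S (\<lambda>x. A *v x + c)"
  by (intro continuous_on_add continuous_on_const continuous_on_id continuous_on_matrix_vector_mult)

lemma C2_patch_linear_image:
  fixes A :: "real^3^3"
  assumes "C2_patch U X Xu Xv Xuu Xuv Xvv"
  shows "C2_patch U (\<lambda>w. A *v X w + c) (\<lambda>w. A *v Xu w) (\<lambda>w. A *v Xv w)
           (\<lambda>w. A *v Xuu w) (\<lambda>w. A *v Xuv w) (\<lambda>w. A *v Xvv w)"
proof -
  note hvd = bounded_linear.has_vector_derivative[OF matrix_vector_mul_bounded_linear]
  show ?thesis
    using assms unfolding C2_patch_def has_vector_derivative_add_const
    by (auto intro!: hvd continuous_on_matrix_vector_mult continuous_on_add continuous_on_const)
qed

lemma homeomorphism_image_inter_open:
  assumes f: "homeomorphism UNIV UNIV f h" and "f ` S = S" and "open V"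
  shows "open (h -` V)" and "f ` (S \<inter> V) = S \<inter> h -` V"
proof -
  show "open (h -` V)"
    using assms(3) f continuous_on_open_vimage[of UNIV h] by (simp add: homeomorphism_def)
  have hf: "h (f x) = x" for x
    using f by (simp add: homeomorphism_def)
  show "f ` (S \<inter> V) = S \<inter> h -` V"
  proof
    show "f ` (S \<inter> V) \<subseteq> S \<inter> h -` V"
      using assms(2) hf by auto
    show "S \<inter> h -` V \<subseteq> f ` (S \<inter> V)"
    proof
      fix y assume y: "y \<in> S \<inter> h -` V"
      then obtain x where "x \<in> S" "y = f x"
        using assms(2) by auto
      then show "y \<in> f ` (S \<inter> V)"
        using y hf by auto
    qed
  qed
qed

lemma spacelike_patch_affine_image:
  assumes P: "spacelike_patch S U X Xu Xv Xuu Xuv Xvv" and A: "lorentz_iso A"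
    and SS: "(\<lambda>p. A *v p + c) ` S = S"
  shows "spacelike_patch S U (\<lambda>w. A *v X w + c) (\<lambda>w. A *v Xu w) (\<lambda>w. A *v Xv w)
           (\<lambda>w. A *v Xuu w) (\<lambda>w. A *v Xuv w) (\<lambda>w. A *v Xvv w)"
proof -
  define f where "f = (\<lambda>p. A *v p + c)"
  define h where "h = (\<lambda>p. lorentz_adj A *v p + (- (lorentz_adj A *v c)))"
  have hf: "h (f y) = y" and fh: "f (h y) = y" for y
    using A by (simp_all add: f_def h_def lorentz_adj_left_inverse lorentz_adj_right_inverse
        matrix_vector_right_distrib matrix_vector_mult_diff_distrib)
  have "continuous_on UNIV f" "continuous_on UNIV h"
    unfolding f_def h_def by (rule continuous_on_affine)+
  then have f_homeo: "homeomorphism UNIV UNIV f h"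
    by (intro homeomorphismI) (auto simp: fh hf)
  obtain g where g: "homeomorphism U (X ` U) X g"
    using P by (auto simp: spacelike_patch_def)
  have "homeomorphism U (f ` X ` U) (f \<circ> X) (g \<circ> h)"
    by (rule homeomorphism_compose[OF g homeomorphism_of_subsets[OF f_homeo]]) auto
  then have homeo: "homeomorphism U ((\<lambda>w. A *v X w + c) ` U) (\<lambda>w. A *v X w + c) (g \<circ> h)"
    by (simp add: f_def o_def image_image)
  obtain V where V: "open V" "X ` U = S \<inter> V"
    using P by (auto simp: spacelike_patch_def)
  have "(\<lambda>w. A *v X w + c) ` U = f ` (S \<inter> V)"
    unfolding V(2)[symmetric] f_def by (simp add: image_image)
  with homeomorphism_image_inter_open[OF f_homeo _ V(1)] SS
  have open_preimage: "open (h -` V)" and image: "(\<lambda>w. A *v X w + c) ` U = S \<inter> h -` V"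
    by (simp_all add: f_def)
  have inj: "inj_on (\<lambda>w. A *v X w + c) U"
    using P hf unfolding spacelike_patch_def inj_on_def f_def by metis
  have C2: "C2_patch U (\<lambda>w. A *v X w + c) (\<lambda>w. A *v Xu w) (\<lambda>w. A *v Xv w)
           (\<lambda>w. A *v Xuu w) (\<lambda>w. A *v Xuv w) (\<lambda>w. A *v Xvv w)"
    using P C2_patch_linear_image by (simp add: spacelike_patch_def)
  have metric: "\<forall>w\<in>U. lor (A *v Xu w) (A *v Xu w) > 0 \<and>
      lor (A *v Xu w) (A *v Xu w) * lor (A *v Xv w) (A *v Xv w) - (lor (A *v Xu w) (A *v Xv w))^2 > 0"
    using P A by (simp add: spacelike_patch_def lorentz_iso_def)
  show ?thesis
    unfolding spacelike_patch_def
    by (intro conjI exI[of _ "g \<circ> h"] exI[of _ "h -` V"] C2 metric inj homeo open_preimage image)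
qed

lemma spacelike_patch_mem: "spacelike_patch S U X Xu Xv Xuu Xuv Xvv \<Longrightarrow> w \<in> U \<Longrightarrow> X w \<in> S"
  by (auto simp: spacelike_patch_def)

lemma mean_curv_lorentz_iso:
  assumes "lorentz_iso A"
  shows "mean_curv (\<lambda>w. A *v Xu w) (\<lambda>w. A *v Xv w) (\<lambda>w. A *v Xuu w) (\<lambda>w. A *v Xuv w)
     (\<lambda>w. A *v Xvv w) (A *v n) w = mean_curv Xu Xv Xuu Xuv Xvv n w"
  using assms by (simp add: mean_curv_def lorentz_iso_def)

definition timelike_unit_normal :: "real^3 \<Rightarrow> real^3 \<Rightarrow> real^3 \<Rightarrow> bool" where
  "timelike_unit_normal n u v \<longleftrightarrow> lor n n = -1 \<and> lor n u = 0 \<and> lor n v = 0"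

lemma exists_timelike_unit_normal:
  assumes "lor u u * lor v v - (lor u v)^2 > 0"
  shows "\<exists>n. timelike_unit_normal n u v"
proof -
  define D where "D = lor u u * lor v v - (lor u v)^2"
  \<comment> \<open>the Lorentzian cross product of \<open>u\<close> and \<open>v\<close>\<close>
  define c :: "real^3" where
    "c = vector [u$2 * v$3 - u$3 * v$2, u$3 * v$1 - u$1 * v$3, u$2 * v$1 - u$1 * v$2]"
  have "lor c c = - D"
    unfolding c_def D_def lor_def by (simp only: vector_3) algebra
  moreover have "lor c u = 0" "lor c v = 0"
    unfolding c_def lor_def by (simp_all add: algebra_simps)
  moreover have "D > 0"
    using assms by (simp add: D_def)
  ultimately have "timelike_unit_normal ((1 / sqrt D) *\<^sub>R c) u v"
    by (simp add: timelike_unit_normal_def lor_scaleR_left lor_scaleR_right)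
  then show ?thesis ..
qed

lemma spacelike_patch_timelike_unit_normal:
  assumes "spacelike_patch S U X Xu Xv Xuu Xuv Xvv" "w \<in> U"
  obtains n where "timelike_unit_normal n (Xu w) (Xv w)"
proof -
  have "lor (Xu w) (Xu w) * lor (Xv w) (Xv w) - (lor (Xu w) (Xv w))^2 > 0"
    using assms by (simp add: spacelike_patch_def)
  then show ?thesis
    using that exists_timelike_unit_normal by blast
qed

definition prescribed_mean_curv :: "real \<Rightarrow> real^3 \<Rightarrow> (real^3) set \<Rightarrow> bool" where
  "prescribed_mean_curv \<alpha> a S \<longleftrightarrow>
     (\<forall>U X Xu Xv Xuu Xuv Xvv w n.
        spacelike_patch S U X Xu Xv Xuu Xuv Xvv \<and> w \<in> U \<and> timelike_unit_normal n (Xu w) (Xv w)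
        \<longrightarrow> mean_curv Xu Xv Xuu Xuv Xvv n w = \<alpha> * lor n a / lor (X w) a)"

lemma prescribed_mean_curv_affine_image:
  assumes H: "prescribed_mean_curv \<alpha> a S" and denom: "\<forall>p\<in>S. lor p a \<noteq> 0"
    and A: "lorentz_iso A" and SS: "(\<lambda>p. A *v p + c) ` S = S"
    and P: "spacelike_patch S U X Xu Xv Xuu Xuv Xvv" and w: "w \<in> U"
    and n: "timelike_unit_normal n (Xu w) (Xv w)"
  shows "mean_curv Xu Xv Xuu Xuv Xvv n w * lor (A *v X w + c) a = \<alpha> * lor (A *v n) a"
proof -
  have "timelike_unit_normal (A *v n) (A *v Xu w) (A *v Xv w)"
    using n A by (simp add: timelike_unit_normal_def lorentz_iso_def)
  then have "mean_curv (\<lambda>w. A *v Xu w) (\<lambda>w. A *v Xv w) (\<lambda>w. A *v Xuu w) (\<lambda>w. A *v Xuv w)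
      (\<lambda>w. A *v Xvv w) (A *v n) w = \<alpha> * lor (A *v n) a / lor (A *v X w + c) a"
    using H spacelike_patch_affine_image[OF P A SS] w unfolding prescribed_mean_curv_def by blast
  then have "mean_curv Xu Xv Xuu Xuv Xvv n w = \<alpha> * lor (A *v n) a / lor (A *v X w + c) a"
    by (simp add: mean_curv_lorentz_iso[OF A])
  moreover have "A *v X w + c \<in> S"
    using SS spacelike_patch_mem[OF P w] by blast
  ultimately show ?thesis
    using denom by simp
qed

lemma cosh_sinh_linear_independent:
  fixes P Q R :: real
  assumes "\<forall>t. P + Q * cosh t + R * sinh t = 0"
  shows "P = 0 \<and> Q = 0 \<and> R = 0"
proof -
  have e0: "P + Q = 0" and e1: "P + Q * cosh 1 + R * sinh 1 = 0"
    and e2: "P + Q * cosh 1 - R * sinh 1 = 0"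
    using assms[rule_format, of 0] assms[rule_format, of 1] assms[rule_format, of "-1"] by simp_all
  have "R * sinh 1 = 0"
    using e1 e2 by linarith
  then have R: "R = 0"
    by simp
  then have "P + Q * cosh 1 = 0"
    using e1 by simp
  then have "Q * cosh 1 = Q * 1"
    using e0 by linarith
  then have "Q = 0"
    by (simp only: mult_cancel_left) simp
  then show ?thesis
    using e0 R by simp
qed

text \<open>The coefficients of \<open>1\<close>, \<open>cosh t\<close> and \<open>sinh t\<close> vanish separately; since
  \<open>a$1 \<noteq> 0\<close>, the constant \<open>k\<close> can be absorbed by a shift of \<open>q\<close> along the axis.\<close>
lemma rot_x_orbit_identity_imp_scaleR_eq:
  fixes q m a :: "real^3" and H \<alpha> k :: real
  assumes orbit: "\<forall>t. H * (lor (rot_x_matrix t *v q) a + k) = \<alpha> * lor (rot_x_matrix t *v m) a"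
    and a_timelike: "lor a a < 0" and a1: "a$1 \<noteq> 0"
  shows "H *\<^sub>R (q - vector [- k / a$1, 0, 0]) = \<alpha> *\<^sub>R m"
proof -
  define x where "x = H * q$2 - \<alpha> * m$2"
  define y where "y = H * q$3 - \<alpha> * m$3"
  have "\<forall>t. (H * (q$1 * a$1 + k) - \<alpha> * m$1 * a$1) + (x * a$2 - y * a$3) * cosh t
      + (y * a$2 - x * a$3) * sinh t = 0"
    using orbit unfolding lor_rot_x_matrix_left x_def y_def by (simp add: algebra_simps)
  from cosh_sinh_linear_independent[OF this]
  have e1: "H * (q$1 * a$1 + k) = \<alpha> * m$1 * a$1"
    and e2: "x * a$2 - y * a$3 = 0" and e3: "y * a$2 - x * a$3 = 0"
    by simp_all
  have "a$1 * a$1 \<ge> 0"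
    by simp
  then have d: "a$2 * a$2 - a$3 * a$3 \<noteq> 0"
    using a_timelike unfolding lor_def by linarith
  have "x * (a$2 * a$2 - a$3 * a$3) = a$2 * (x * a$2 - y * a$3) + a$3 * (y * a$2 - x * a$3)"
    by (simp add: algebra_simps)
  then have "x = 0"
    using d e2 e3 by simp
  have "y * (a$2 * a$2 - a$3 * a$3) = a$3 * (x * a$2 - y * a$3) + a$2 * (y * a$2 - x * a$3)"
    by (simp add: algebra_simps)
  then have "y = 0"
    using d e2 e3 by simp
  moreover note \<open>x = 0\<close>
  moreover have "H * (q$1 + k / a$1) = \<alpha> * m$1"
    using e1 a1 by (simp add: field_simps)
  ultimately show ?thesis
    by (simp add: vec_eq_iff forall_3 x_def y_def algebra_simps)
qed

text \<open>Rotations about the axis preserve \<open>S\<close> and the mean curvature, so the equation holds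
  at every point of the orbit of \<open>X w\<close> with the rotated normal.\<close>
lemma prescribed_mean_curv_rot_orbit:
  assumes M: "lorentz_iso M" and Psi: "\<Psi> = (\<lambda>x. M *v x + b)"
    and invariant: "\<forall>\<theta>. (\<lambda>p. \<Psi> (rot_x \<theta> (inv \<Psi> p))) ` S = S"
    and denom: "\<forall>p\<in>S. lor p a \<noteq> 0" and prescribed: "prescribed_mean_curv \<alpha> a S"
    and P: "spacelike_patch S U X Xu Xv Xuu Xuv Xvv" and w: "w \<in> U"
    and n: "timelike_unit_normal n (Xu w) (Xv w)"
  shows "mean_curv Xu Xv Xuu Xuv Xvv n w *
      (lor (rot_x_matrix t *v (lorentz_adj M *v (X w - b))) (lorentz_adj M *v a) + lor b a) =
    \<alpha> * lor (rot_x_matrix t *v (lorentz_adj M *v n)) (lorentz_adj M *v a)"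
proof -
  define At where "At = M ** rot_x_matrix t ** lorentz_adj M"
  have At: "At *v y = M *v (rot_x_matrix t *v (lorentz_adj M *v y))" for y
    by (simp add: At_def matrix_vector_mul_assoc matrix_mul_assoc)
  have iso: "lorentz_iso At"
    unfolding At_def by (intro lorentz_iso_mult lorentz_iso_rot_x_matrix lorentz_iso_adj M)
  have "(\<lambda>p. \<Psi> (rot_x t (inv \<Psi> p))) = (\<lambda>p. At *v p + (b - At *v b))"
    by (auto simp: Psi inv_affine_lorentz_iso[OF M] rot_x_eq_matrix At
        matrix_vector_mult_diff_distrib)
  then have "(\<lambda>p. At *v p + (b - At *v b)) ` S = S"
    using invariant by metis
  from prescribed_mean_curv_affine_image[OF prescribed denom iso this P w n]
  have "mean_curv Xu Xv Xuu Xuv Xvv n w * lor (At *v X w + (b - At *v b)) a = \<alpha> * lor (At *v n) a" .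
  moreover have "At *v X w + (b - At *v b) = At *v (X w - b) + b"
    by (simp add: matrix_vector_mult_diff_distrib)
  ultimately have "mean_curv Xu Xv Xuu Xuv Xvv n w * lor (At *v (X w - b) + b) a = \<alpha> * lor (At *v n) a"
    by simp
  then show ?thesis
    by (simp only: At lor_add_left lor_lorentz_iso_left[OF M])
qed

lemma position_parallel_timelike_normal:
  assumes M: "lorentz_iso M" and Psi: "\<Psi> = (\<lambda>x. M *v x + b)"
    and a_timelike: "timelike a" and a1: "(lorentz_adj M *v a)$1 \<noteq> 0"
    and invariant: "\<forall>\<theta>. (\<lambda>p. \<Psi> (rot_x \<theta> (inv \<Psi> p))) ` S = S"
    and denom: "\<forall>p\<in>S. lor p a \<noteq> 0" and prescribed: "prescribed_mean_curv \<alpha> a S"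
    and P: "spacelike_patch S U X Xu Xv Xuu Xuv Xvv" and w: "w \<in> U"
    and n: "timelike_unit_normal n (Xu w) (Xv w)"
  shows "mean_curv Xu Xv Xuu Xuv Xvv n w *\<^sub>R
           (X w - \<Psi> (vector [- lor b a / (lorentz_adj M *v a)$1, 0, 0])) = \<alpha> *\<^sub>R n"
proof -
  define a' where "a' = lorentz_adj M *v a"
  define H where "H = mean_curv Xu Xv Xuu Xuv Xvv n w"
  define q where "q = lorentz_adj M *v (X w - b)"
  define m where "m = lorentz_adj M *v n"
  have orbit: "\<forall>t. H * (lor (rot_x_matrix t *v q) a' + lor b a) = \<alpha> * lor (rot_x_matrix t *v m) a'"
    using prescribed_mean_curv_rot_orbit[OF M Psi invariant denom prescribed P w n]
    by (simp add: H_def q_def m_def a'_def)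
  have "lor a' a' < 0"
    using a_timelike lorentz_iso_adj[OF M] by (simp add: a'_def timelike_def lorentz_iso_def)
  from rot_x_orbit_identity_imp_scaleR_eq[OF orbit this] a1
  have "H *\<^sub>R (q - vector [- lor b a / a'$1, 0, 0]) = \<alpha> *\<^sub>R m"
    by (simp add: a'_def)
  then have "M *v (H *\<^sub>R (q - vector [- lor b a / a'$1, 0, 0])) = M *v (\<alpha> *\<^sub>R m)"
    by simp
  then show ?thesis
    by (simp add: Psi H_def q_def m_def a'_def lorentz_adj_right_inverse[OF M]
        matrix_vector_mult_scaleR matrix_vector_mult_diff_distrib algebra_simps)
qed

lemma lor_orthogonal_of_parallel_timelike_normal:
  assumes parallel: "H *\<^sub>R v = \<alpha> *\<^sub>R n" and "\<alpha> \<noteq> 0" and n: "timelike_unit_normal n u u'"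
  shows "lor v u = 0 \<and> lor v u' = 0 \<and> lor v v < 0"
proof -
  have "H \<noteq> 0"
    using assms by (auto simp: timelike_unit_normal_def lor_def)
  have "v = inverse H *\<^sub>R (H *\<^sub>R v)"
    using \<open>H \<noteq> 0\<close> by simp
  also have "\<dots> = (\<alpha> / H) *\<^sub>R n"
    using parallel by (simp add: divide_inverse mult.commute)
  finally have "v = (\<alpha> / H) *\<^sub>R n" .
  moreover have "(\<alpha> / H) * (\<alpha> / H) > 0"
    using \<open>H \<noteq> 0\<close> \<open>\<alpha> \<noteq> 0\<close> not_real_square_gt_zero[of "\<alpha> / H"] by simp
  ultimately show ?thesis
    using n by (simp add: timelike_unit_normal_def lor_scaleR_left lor_scaleR_right)
qed

lemma has_real_derivative_lor_self:
  assumes "(\<gamma> has_vector_derivative \<gamma>') (at t)"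
  shows "((\<lambda>t. lor (\<gamma> t - P) (\<gamma> t - P)) has_real_derivative 2 * lor (\<gamma> t - P) \<gamma>') (at t)"
proof -
  have d: "((\<lambda>t. \<gamma> t $ i) has_real_derivative \<gamma>' $ i) (at t)" for i
    using bounded_linear.has_vector_derivative[OF bounded_linear_vec_nth assms]
    by (simp add: has_real_derivative_iff_has_vector_derivative)
  have "((\<lambda>t. (\<gamma> t $ 1 - P$1) * (\<gamma> t $ 1 - P$1) + (\<gamma> t $ 2 - P$2) * (\<gamma> t $ 2 - P$2)
          - (\<gamma> t $ 3 - P$3) * (\<gamma> t $ 3 - P$3)) has_real_derivative 2 * lor (\<gamma> t - P) \<gamma>') (at t)"
    by (rule derivative_eq_intros d refl)+ (simp add: lor_def algebra_simps)
  then show ?thesis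
    by (simp add: lor_def)
qed

lemma zero_partials_imp_locally_constant:
  fixes f :: "real \<times> real \<Rightarrow> real"
  assumes "open U" "(u0, v0) \<in> U"
    and du: "\<And>u v. (u, v) \<in> U \<Longrightarrow> ((\<lambda>t. f (t, v)) has_real_derivative 0) (at u)"
    and dv: "\<And>u v. (u, v) \<in> U \<Longrightarrow> ((\<lambda>t. f (u, t)) has_real_derivative 0) (at v)"
  obtains B where "open B" "(u0, v0) \<in> B" "B \<subseteq> U" "\<forall>w\<in>B. f w = f (u0, v0)"
proof -
  obtain A B where AB: "open A" "open B" "(u0, v0) \<in> A \<times> B" "A \<times> B \<subseteq> U"
    using open_prod_elim[OF assms(1,2)] .
  have "u0 \<in> A" "v0 \<in> B"
    using AB(3) by simp_all
  then obtain e1 e2 where e1: "e1 > 0" "ball u0 e1 \<subseteq> A" and e2: "e2 > 0" "ball v0 e2 \<subseteq> B"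
    using AB(1,2) open_contains_ball by metis
  have box: "(u, v) \<in> U" if "u \<in> ball u0 e1" "v \<in> ball v0 e2" for u v
  proof -
    have "(u, v) \<in> A \<times> B"
      using that e1 e2 by auto
    then show ?thesis
      using AB(4) by auto
  qed
  have const: "f (u, v) = f (u0, v0)" if u: "u \<in> ball u0 e1" and v: "v \<in> ball v0 e2" for u v
  proof -
    have "\<exists>c. \<forall>t\<in>ball v0 e2. f (u, t) = c"
    proof (rule has_field_derivative_zero_constant)
      fix t assume "t \<in> ball v0 e2"
      then show "((\<lambda>t. f (u, t)) has_real_derivative 0) (at t within ball v0 e2)"
        using box u dv has_field_derivative_at_within by blast
    qed simp
    then obtain c1 where c1: "\<forall>t\<in>ball v0 e2. f (u, t) = c1" ..
    have "\<exists>c. \<forall>t\<in>ball u0 e1. f (t, v0) = c"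
    proof (rule has_field_derivative_zero_constant)
      fix t assume "t \<in> ball u0 e1"
      then show "((\<lambda>t. f (t, v0)) has_real_derivative 0) (at t within ball u0 e1)"
        using box e2 du has_field_derivative_at_within by (metis centre_in_ball)
    qed simp
    then obtain c2 where c2: "\<forall>t\<in>ball u0 e1. f (t, v0) = c2" ..
    have "f (u, v) = f (u, v0)"
      using c1 v e2 by simp
    also have "\<dots> = f (u0, v0)"
      using c2 u e1 by simp
    finally show ?thesis .
  qed
  show ?thesis
  proof (rule that[of "ball u0 e1 \<times> ball v0 e2"])
    show "open (ball u0 e1 \<times> ball v0 e2)"
      by (simp add: open_Times)
    show "(u0, v0) \<in> ball u0 e1 \<times> ball v0 e2"
      using e1 e2 by simp
    show "ball u0 e1 \<times> ball v0 e2 \<subseteq> U"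
      using box by auto
    show "\<forall>w\<in>ball u0 e1 \<times> ball v0 e2. f w = f (u0, v0)"
      using const by auto
  qed
qed

lemma spacelike_patch_image_openin:
  assumes P: "spacelike_patch S U X Xu Xv Xuu Xuv Xvv" and "open B" "B \<subseteq> U"
  shows "openin (top_of_set S) (X ` B)"
proof -
  obtain g where g: "homeomorphism U (X ` U) X g"
    using P by (auto simp: spacelike_patch_def)
  obtain V where "open V" "X ` U = S \<inter> V"
    using P by (auto simp: spacelike_patch_def)
  then have "openin (top_of_set S) (X ` U)"
    by (simp add: openin_open_Int)
  moreover have "openin (top_of_set (X ` U)) (X ` B)"
    using homeomorphism_imp_open_map[OF g] assms(2,3) by (simp add: open_subset)
  ultimately show ?thesis
    using openin_trans by blast
qed

lemma spacelike_patch_lor_dist_locally_constant: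
  assumes P: "spacelike_patch S U X Xu Xv Xuu Xuv Xvv" and w0: "w0 \<in> U"
    and orth: "\<And>w. w \<in> U \<Longrightarrow> lor (X w - P0) (Xu w) = 0 \<and> lor (X w - P0) (Xv w) = 0"
  obtains T where "openin (top_of_set S) T" "X w0 \<in> T"
    "\<forall>y\<in>T. lor (y - P0) (y - P0) = lor (X w0 - P0) (X w0 - P0)"
proof -
  have C2: "C2_patch U X Xu Xv Xuu Xuv Xvv"
    using P by (simp add: spacelike_patch_def)
  have du: "((\<lambda>t. lor (X (t, v) - P0) (X (t, v) - P0)) has_real_derivative 0) (at u)"
    if "(u, v) \<in> U" for u v
  proof -
    have "((\<lambda>t. X (t, v)) has_vector_derivative Xu (u, v)) (at u)"
      using C2 that unfolding C2_patch_def by fastforce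
    from has_real_derivative_lor_self[OF this, of P0] show ?thesis
      using orth[OF that] by simp
  qed
  have dv: "((\<lambda>t. lor (X (u, t) - P0) (X (u, t) - P0)) has_real_derivative 0) (at v)"
    if "(u, v) \<in> U" for u v
  proof -
    have "((\<lambda>t. X (u, t)) has_vector_derivative Xv (u, v)) (at v)"
      using C2 that unfolding C2_patch_def by fastforce
    from has_real_derivative_lor_self[OF this, of P0] show ?thesis
      using orth[OF that] by simp
  qed
  obtain u0 v0 where w0_eq: "w0 = (u0, v0)"
    by fastforce
  have "open U"
    using C2 by (simp add: C2_patch_def)
  from zero_partials_imp_locally_constant[OF this w0[unfolded w0_eq] du dv]
  obtain B where "open B" "w0 \<in> B" "B \<subseteq> U"
    and B: "\<forall>w\<in>B. lor (X w - P0) (X w - P0) = lor (X w0 - P0) (X w0 - P0)"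
    unfolding w0_eq by blast
  then show ?thesis
    using that[of "X ` B"] spacelike_patch_image_openin[OF P] by blast
qed

lemma spacelike_surface_on_hyperboloid:
  assumes surf: "spacelike_surface S"
    and normal: "\<And>U X Xu Xv Xuu Xuv Xvv w. spacelike_patch S U X Xu Xv Xuu Xuv Xvv \<Longrightarrow> w \<in> U \<Longrightarrow>
      lor (X w - P0) (Xu w) = 0 \<and> lor (X w - P0) (Xv w) = 0 \<and> lor (X w - P0) (X w - P0) < 0"
  obtains r where "r > 0" "\<forall>p\<in>S. lor (p - P0) (p - P0) = - (r^2)"
proof -
  have patch_at: "\<exists>U X Xu Xv Xuu Xuv Xvv w. spacelike_patch S U X Xu Xv Xuu Xuv Xvv \<and> w \<in> U \<and> p = X w"
    if "p \<in> S" for p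
    using surf that unfolding spacelike_surface_def by blast
  obtain p0 where p0: "p0 \<in> S"
    using surf by (auto simp: spacelike_surface_def)
  have "lor (p0 - P0) (p0 - P0) = lor (p - P0) (p - P0)" if p: "p \<in> S" for p
  proof (rule connected_equivalence_relation[OF _ p0 p])
    show "connected S"
      using surf by (simp add: spacelike_surface_def)
    fix q assume "q \<in> S"
    then obtain U X Xu Xv Xuu Xuv Xvv w
      where P: "spacelike_patch S U X Xu Xv Xuu Xuv Xvv" and w: "w \<in> U" and q: "q = X w"
      using patch_at by blast
    have "\<And>w. w \<in> U \<Longrightarrow> lor (X w - P0) (Xu w) = 0 \<and> lor (X w - P0) (Xv w) = 0"
      using normal[OF P] by blast
    from spacelike_patch_lor_dist_locally_constant[OF P w this]
    obtain T where "openin (top_of_set S) T" "X w \<in> T"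
      "\<forall>y\<in>T. lor (y - P0) (y - P0) = lor (X w - P0) (X w - P0)" .
    then show "\<exists>T. openin (top_of_set S) T \<and> q \<in> T \<and>
        (\<forall>y\<in>T. lor (q - P0) (q - P0) = lor (y - P0) (y - P0))"
      unfolding q by (metis (no_types, lifting))
  qed auto
  moreover have "lor (p0 - P0) (p0 - P0) < 0"
    using patch_at[OF p0] normal by blast
  ultimately show ?thesis
    using that[of "sqrt (- lor (p0 - P0) (p0 - P0))"] by force
qed

lemma connected_timelike_same_time_orientation:
  assumes "connected T" and timelike: "\<forall>p\<in>T. lor p p < 0"
  shows "(\<forall>p\<in>T. 0 < p$3) \<or> (\<forall>p\<in>T. p$3 < 0)"
proof -
  have "continuous_on UNIV (\<lambda>p::real^3. p$3)"
    by (simp add: linear_continuous_on bounded_linear_vec_nth)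
  then have A: "open {p::real^3. 0 < p$3}" and B: "open {p::real^3. p$3 < 0}"
    using open_Collect_less[OF continuous_on_const] open_Collect_less[OF _ continuous_on_const]
    by blast+
  have cover: "T \<subseteq> {p. 0 < p$3} \<union> {p. p$3 < 0}"
  proof
    fix p assume "p \<in> T"
    have "p$1 * p$1 \<ge> 0" "p$2 * p$2 \<ge> 0" "lor p p < 0"
      using timelike \<open>p \<in> T\<close> by simp_all
    then have "p$3 * p$3 > 0"
      unfolding lor_def by linarith
    then have "p$3 \<noteq> 0"
      by (metis mult_zero_left less_irrefl)
    then show "p \<in> {p. 0 < p$3} \<union> {p. p$3 < 0}"
      by auto
  qed
  have "{p. 0 < p$3} \<inter> {p. p$3 < 0} \<inter> T = {}"
    by auto
  from connectedD[OF assms(1) A B this cover] show ?thesis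
    using cover by (auto simp: disjoint_iff subset_iff)
qed

lemma connected_hyperboloid_to_hyperbolic_plane:
  assumes "connected T" "r > 0" and on_hyperboloid: "\<forall>p\<in>T. lor p p = - (r^2)"
  shows "\<exists>\<sigma>. rigid_motion \<sigma> \<and> \<sigma> ` x_axis = x_axis \<and> \<sigma> ` T \<subseteq> hyperbolic_plane r"
proof -
  have "\<forall>p\<in>T. lor p p < 0"
    using on_hyperboloid \<open>r > 0\<close> by simp
  from connected_timelike_same_time_orientation[OF assms(1) this] show ?thesis
  proof
    assume "\<forall>p\<in>T. 0 < p$3"
    then show ?thesis
      using on_hyperboloid rigid_motion_affine[of "mat 1" 0]
      by (intro exI[of _ "\<lambda>x. x"]) (auto simp: lorentz_iso_def hyperbolic_plane_def)
  next
    assume "\<forall>p\<in>T. p$3 < 0"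
    moreover have "time_flip *v p = p" if "p \<in> x_axis" for p
      using that by (simp add: time_flip_apply x_axis_def vec_eq_iff forall_3)
    then have "(\<lambda>x. time_flip *v x) ` x_axis = x_axis"
      by auto
    ultimately show ?thesis
      using on_hyperboloid rigid_motion_time_flip
      by (intro exI[of _ "\<lambda>x. time_flip *v x"])
        (auto simp: hyperbolic_plane_def time_flip_apply lor_def)
  qed
qed

lemma translate_x_axis:
  assumes "c \<in> x_axis"
  shows "(\<lambda>x. x - c) ` x_axis = x_axis"
proof (intro equalityI subsetI)
  fix y assume "y \<in> (\<lambda>x. x - c) ` x_axis"
  then show "y \<in> x_axis"
    using assms by (auto simp: x_axis_def)
next
  fix y assume "y \<in> x_axis"
  then have "y + c \<in> x_axis"
    using assms by (simp add: x_axis_def)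
  then show "y \<in> (\<lambda>x. x - c) ` x_axis"
    by (rule image_eqI[rotated]) simp
qed

lemma rigid_motion_centre_axis:
  fixes b :: "real^3"
  assumes M: "lorentz_iso M" and c0: "c0 \<in> x_axis"
  defines "\<Phi> \<equiv> \<lambda>p. lorentz_adj M *v (p - (M *v c0 + b))"
  shows "rigid_motion \<Phi>" and "\<Phi> ` (\<lambda>x. M *v x + b) ` x_axis = x_axis"
proof -
  have affine: "\<Phi> = (\<lambda>p. lorentz_adj M *v p + (- (lorentz_adj M *v (M *v c0 + b))))"
    by (simp add: \<Phi>_def matrix_vector_mult_diff_distrib)
  show "rigid_motion \<Phi>"
    unfolding affine by (rule rigid_motion_affine[OF lorentz_iso_adj[OF M]])
  have "\<Phi> (M *v x + b) = x - c0" for x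
  proof -
    have "M *v x + b - (M *v c0 + b) = M *v (x - c0)"
      by (simp add: matrix_vector_mult_diff_distrib)
    then show ?thesis
      by (simp add: \<Phi>_def lorentz_adj_left_inverse[OF M])
  qed
  then have "\<Phi> ` (\<lambda>x. M *v x + b) ` x_axis = (\<lambda>x. x - c0) ` x_axis"
    by (simp add: image_image)
  then show "\<Phi> ` (\<lambda>x. M *v x + b) ` x_axis = x_axis"
    using translate_x_axis[OF c0] by simp
qed

lemma rigid_motion_onto_hyperbolic_plane:
  assumes M: "lorentz_iso M" and c0: "c0 \<in> x_axis" and "connected S" "r > 0"
    and on_hyperboloid: "\<forall>p\<in>S. lor (p - (M *v c0 + b)) (p - (M *v c0 + b)) = - (r^2)"
  shows "\<exists>\<Phi>. rigid_motion \<Phi> \<and> \<Phi> ` (\<lambda>x. M *v x + b) ` x_axis = x_axis \<and>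
    \<Phi> ` S \<subseteq> hyperbolic_plane r"
proof -
  define \<Phi>\<^sub>0 where "\<Phi>\<^sub>0 = (\<lambda>p. lorentz_adj M *v (p - (M *v c0 + b)))"
  note centre = rigid_motion_centre_axis[OF M c0, of b, folded \<Phi>\<^sub>0_def]
  have "continuous_on S \<Phi>\<^sub>0"
    unfolding \<Phi>\<^sub>0_def by (intro continuous_on_matrix_vector_mult continuous_on_diff
        continuous_on_id continuous_on_const)
  then have "connected (\<Phi>\<^sub>0 ` S)"
    using \<open>connected S\<close> by (rule connected_continuous_image)
  moreover have "\<forall>p\<in>\<Phi>\<^sub>0 ` S. lor p p = - (r^2)"
    using on_hyperboloid lorentz_iso_adj[OF M] unfolding lorentz_iso_def by (simp add: \<Phi>\<^sub>0_def)
  ultimately obtain \<sigma> where \<sigma>: "rigid_motion \<sigma>" "\<sigma> ` x_axis = x_axis"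
    "\<sigma> ` \<Phi>\<^sub>0 ` S \<subseteq> hyperbolic_plane r"
    using connected_hyperboloid_to_hyperbolic_plane \<open>r > 0\<close> by metis
  show ?thesis
  proof (intro exI conjI)
    show "rigid_motion (\<sigma> \<circ> \<Phi>\<^sub>0)"
      using rigid_motion_comp[OF centre(1) \<sigma>(1)] .
    show "(\<sigma> \<circ> \<Phi>\<^sub>0) ` (\<lambda>x. M *v x + b) ` x_axis = x_axis"
      using centre(2) \<sigma>(2) by (simp only: image_comp[symmetric])
    show "(\<sigma> \<circ> \<Phi>\<^sub>0) ` S \<subseteq> hyperbolic_plane r"
      using \<sigma>(3) by (simp only: image_comp[symmetric])
  qed
qed

lemma lor_orthogonal_affine_x_axis:
  assumes "lorentz_iso M" "(lorentz_adj M *v a)$1 = 0"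
    and "p \<in> (\<lambda>x. M *v x + b) ` x_axis" "q \<in> (\<lambda>x. M *v x + b) ` x_axis"
  shows "lor a (p - q) = 0"
proof -
  obtain x y where "x \<in> x_axis" "y \<in> x_axis" "p - q = M *v (x - y)"
    using assms(3,4) by (auto simp: matrix_vector_mult_diff_distrib)
  then have "lor a (p - q) = lor (x - y) (lorentz_adj M *v a)" and "(x - y) \<in> x_axis"
    by (simp_all add: lor_sym[of a] lor_lorentz_iso_left[OF assms(1)] x_axis_def)
  then show ?thesis
    using assms(2) by (simp add: x_axis_def lor_def)
qed

theorem proposition2p3:
  fixes \<alpha> :: real and a :: "real^3" and S :: "(real^3) set"
    and \<Psi> :: "real^3 \<Rightarrow> real^3" and L :: "(real^3) set"
  assumes alpha_nz: "\<alpha> \<noteq> 0"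
    and a_timelike: "timelike a"
    and surf: "spacelike_surface S"
    and axis: "rigid_motion \<Psi>" "L = \<Psi> ` x_axis"
    and invariant: "\<forall>\<theta>. (\<lambda>p. \<Psi> (rot_x \<theta> (inv \<Psi> p))) ` S = S"
    and denom: "\<forall>p\<in>S. lor p a \<noteq> 0"
    and eqn: "\<forall>U X Xu Xv Xuu Xuv Xvv w n.
               spacelike_patch S U X Xu Xv Xuu Xuv Xvv \<and> w \<in> U \<and>
               lor n n = -1 \<and> lor n (Xu w) = 0 \<and> lor n (Xv w) = 0 \<longrightarrow>
               mean_curv Xu Xv Xuu Xuv Xvv n w = \<alpha> * lor n a / lor (X w) a"
  shows "(\<forall>p\<in>L. \<forall>q\<in>L. lor a (p - q) = 0) \<or>
         (\<exists>\<Phi> r. rigid_motion \<Phi> \<and> \<Phi> ` L = x_axis \<and> r > 0 \<and> \<Phi> ` S \<subseteq> hyperbolic_plane r)"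
proof -
  obtain M b where M: "lorentz_iso M" and Psi: "\<Psi> = (\<lambda>x. M *v x + b)"
    using axis(1) by (auto simp: rigid_motion_iff)
  show ?thesis
  proof (cases "(lorentz_adj M *v a)$1 = 0")
    case True
    then show ?thesis
      using lor_orthogonal_affine_x_axis[OF M] axis(2) Psi by blast
  next
    case False
    define c0 :: "real^3" where "c0 = vector [- lor b a / (lorentz_adj M *v a)$1, 0, 0]"
    have prescribed: "prescribed_mean_curv \<alpha> a S"
      using eqn by (simp add: prescribed_mean_curv_def timelike_unit_normal_def)
    have "lor (X w - \<Psi> c0) (Xu w) = 0 \<and> lor (X w - \<Psi> c0) (Xv w) = 0 \<and>
        lor (X w - \<Psi> c0) (X w - \<Psi> c0) < 0"
      if P: "spacelike_patch S U X Xu Xv Xuu Xuv Xvv" and w: "w \<in> U" for U X Xu Xv Xuu Xuv Xvv w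
    proof -
      obtain n where n: "timelike_unit_normal n (Xu w) (Xv w)"
        using spacelike_patch_timelike_unit_normal[OF P w] .
      from position_parallel_timelike_normal[OF M Psi a_timelike False invariant denom prescribed P w n]
      show ?thesis
        using lor_orthogonal_of_parallel_timelike_normal alpha_nz n unfolding c0_def by blast
    qed
    then obtain r where "r > 0" "\<forall>p\<in>S. lor (p - \<Psi> c0) (p - \<Psi> c0) = - (r^2)"
      using spacelike_surface_on_hyperboloid[OF surf] by metis
    moreover have "c0 \<in> x_axis" "connected S"
      using surf by (simp_all add: c0_def x_axis_def spacelike_surface_def)
    ultimately show ?thesis
      using rigid_motion_onto_hyperbolic_plane[OF M] axis(2) Psi by metis
  qed
qed

end
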